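(* For the SSBM of the context with $k\ge2$ clusters of general sizes $(n_1,\dots,n_k)$ and aspect ratio $\rho$ satisfying $\sqrt\rho>1-\frac1{4k(2+\sqrt k)}$, it holds that $V_{k-1}(\mathcal L_{sym})=\Theta R_{k-1}$, where $R_{k-1}\in\mathbb R^{k\times(k-1)}$ consists of the $k-1$ smallest (orthonormal) eigenvectors of $\bar C$. Furthermore, $$\lambda_{n-k+1}(\mathcal L_{sym})-\lambda_{n-k+2}(\mathcal L_{sym})\ge\frac{1-2\eta}k.$$
   Context: SSBM: integers $n\ge2,k\ge2$, $p\in(0,1]$, $\eta\in[0,1/2)$, partition of $[n]$ into nonempty clusters $C_1,\dots,C_k$, $|C_i|=n_i$; edges present independently w.p. $p$, signed $+1$ within and $-1$ across clusters, signs flipped independently w.p. $\eta$. $A$ symmetric signed adjacency, $\bar D=\mathrm{diag}(|A|\mathbf1)$, $\bar d=p(n-1)$, $\mathcal L_{sym}=I-(\mathbb E\bar D)^{-1/2}\mathbb EA(\mathbb E\bar D)^{-1/2}$ with eigenvalues $\lambda_1\ge\dots\ge\lambda_n$. $\rho=\min_in_i/\max_in_i$. $\Theta_{ji}=1/\sqrt{n_i}$ if $j\in C_i$ else 0. $V_{k-1}(M)$: $n\times(k-1)$ matrix of orthonormal eigenvectors of the $k-1$ smallest eigenvalues. $\bar\alpha=1+\frac p{\bar d}(1-2\eta)$, $\bar C=\bar\alpha I_k-\bar B$ with $\bar B_{ii}=\frac{n_ip}{\bar d}(1-2\eta)$, $\bar B_{ii'}=-\frac{\sqrt{n_in_{i'}}p}{\bar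 d}(1-2\eta)$ for $i\ne i'$. *)

theory Defs
  imports "Jordan_Normal_Form.Char_Poly" "HOL-Probability.Probability_Mass_Function"
begin

text \<open>Vertices are 0,...,n-1 and clusters are 0,...,k-1.  The partition into
clusters is given by an assignment cl :: nat => nat (vertex j lies in cluster cl j).\<close>

definition valid_partition :: "nat \<Rightarrow> nat \<Rightarrow> (nat \<Rightarrow> nat) \<Rightarrow> bool" where
  "valid_partition n k cl \<longleftrightarrow> (\<forall>j<n. cl j < k) \<and> (\<forall>i<k. \<exists>j<n. cl j = i)"

definition csize :: "nat \<Rightarrow> (nat \<Rightarrow> nat) \<Rightarrow> nat \<Rightarrow> nat" where
  "csize n cl i = card {j. j < n \<and> cl j = i}"

definition aspect_ratio :: "nat \<Rightarrow> nat \<Rightarrow> (nat \<Rightarrow> nat) \<Rightarrow> real" where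
  "aspect_ratio n k cl =
     real (Min (csize n cl ` {..<k})) / real (Max (csize n cl ` {..<k}))"

text \<open>Distribution of the signed adjacency entry A_jl (j \<noteq> l) in the SSBM:
an edge is present w.p. p, its sign is +1 within and -1 across clusters,
and this sign is flipped w.p. eta.\<close>
definition entry_pmf :: "real \<Rightarrow> real \<Rightarrow> (nat \<Rightarrow> nat) \<Rightarrow> nat \<Rightarrow> nat \<Rightarrow> real pmf" where
  "entry_pmf p \<eta> cl j l =
     bind_pmf (bernoulli_pmf p) (\<lambda>e. bind_pmf (bernoulli_pmf \<eta>) (\<lambda>f.
       return_pmf (if e then (let s = (if cl j = cl l then 1 else -1) in if f then - s else s)
                   else 0)))"

definition EA :: "nat \<Rightarrow> real \<Rightarrow> real \<Rightarrow> (nat \<Rightarrow> nat) \<Rightarrow> real mat" where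
  "EA n p \<eta> cl = Matrix.mat n n (\<lambda>(j,l). if j = l then 0
       else measure_pmf.expectation (entry_pmf p \<eta> cl j l) (\<lambda>x. x))"

definition EDbar :: "nat \<Rightarrow> real \<Rightarrow> real \<Rightarrow> (nat \<Rightarrow> nat) \<Rightarrow> real mat" where
  "EDbar n p \<eta> cl = Matrix.mat n n (\<lambda>(j,l). if j = l then
       (\<Sum>m\<in>{..<n} - {j}. measure_pmf.expectation (entry_pmf p \<eta> cl j m) (\<lambda>x. \<bar>x\<bar>))
       else 0)"

definition diag_inv_sqrt :: "real mat \<Rightarrow> real mat" where
  "diag_inv_sqrt D = Matrix.mat (dim_row D) (dim_row D)
      (\<lambda>(i,j). if i = j then 1 / sqrt (D $$ (i,i)) else 0)"

definition Lsym :: "nat \<Rightarrow> real \<Rightarrow> real \<Rightarrow> (nat \<Rightarrow> nat) \<Rightarrow> real mat" where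
  "Lsym n p \<eta> cl = 1\<^sub>m n - diag_inv_sqrt (EDbar n p \<eta> cl) * EA n p \<eta> cl * diag_inv_sqrt (EDbar n p \<eta> cl)"

definition eigs_desc :: "real mat \<Rightarrow> real list" where
  "eigs_desc M = (THE xs. length xs = dim_row M \<and> sorted_wrt (\<ge>) xs \<and>
       char_poly M = prod_list (map (\<lambda>x. [:- x, 1:]) xs))"

text \<open>lambda_i(M), 1-indexed as in the paper.\<close>
definition eig :: "real mat \<Rightarrow> nat \<Rightarrow> real" where
  "eig M i = eigs_desc M ! (i - 1)"

text \<open>V is a valid choice of V_m(M): an (dim M) x m matrix with orthonormal columns
that are eigenvectors of M for its m smallest eigenvalues; column j (0-indexed)
belongs to lambda_{N-j}(M), i.e. columns ordered by increasing eigenvalue.\<close>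
definition is_bottom_eigvecs :: "real mat \<Rightarrow> nat \<Rightarrow> real mat \<Rightarrow> bool" where
  "is_bottom_eigvecs M m V \<longleftrightarrow>
     dim_row V = dim_row M \<and> dim_col V = m \<and> transpose_mat V * V = 1\<^sub>m m \<and>
     (\<forall>j<m. M *\<^sub>v col V j = eig M (dim_row M - j) \<cdot>\<^sub>v col V j)"

definition Theta :: "nat \<Rightarrow> nat \<Rightarrow> (nat \<Rightarrow> nat) \<Rightarrow> real mat" where
  "Theta n k cl = Matrix.mat n k (\<lambda>(j,i). if cl j = i then 1 / sqrt (real (csize n cl i)) else 0)"

definition dbar :: "nat \<Rightarrow> real \<Rightarrow> real" where
  "dbar n p = p * (real n - 1)"

definition alphabar :: "nat \<Rightarrow> real \<Rightarrow> real \<Rightarrow> real" where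
  "alphabar n p \<eta> = 1 + p / dbar n p * (1 - 2 * \<eta>)"

definition Bbar :: "nat \<Rightarrow> nat \<Rightarrow> real \<Rightarrow> real \<Rightarrow> (nat \<Rightarrow> nat) \<Rightarrow> real mat" where
  "Bbar n k p \<eta> cl = Matrix.mat k k (\<lambda>(i,i'). if i = i' then real (csize n cl i) * p / dbar n p * (1 - 2 * \<eta>)
      else - sqrt (real (csize n cl i) * real (csize n cl i')) * p / dbar n p * (1 - 2 * \<eta>))"

definition Cbar :: "nat \<Rightarrow> nat \<Rightarrow> real \<Rightarrow> real \<Rightarrow> (nat \<Rightarrow> nat) \<Rightarrow> real mat" where
  "Cbar n k p \<eta> cl = alphabar n p \<eta> \<cdot>\<^sub>m 1\<^sub>m k - Bbar n k p \<eta> cl"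

end

theory Submission
  imports Defs
begin

(*
  In expectation every off-diagonal entry of A is +-p(1 - 2 eta) and every degree is dbar, so
  L_sym = alphabar I - Theta Bbar Theta^T, where Theta has orthonormal columns, and
  Cbar = alphabar I - Bbar.  Such a compression has the spectrum of Cbar together with alphabar
  repeated n - k times, and its eigenvectors for eigenvalues other than alphabar lie in the
  range of Theta.

  x I - Cbar is a diagonal matrix minus a positive rank-one matrix, so above its largest
  diagonal pole alphabar - 2 c min n_i, with c = (1 - 2 eta)/(n - 1), the eigenvalues of Cbar
  are the zeros of a strictly increasing secular function, which is <= 0 at alphabar.  Hence
  exactly one eigenvalue of Cbar is >= alphabar and all others are <= alphabar - 2 c min n_i,
  which gives both claims.  The bound 2 c min n_i >= (1 - 2 eta)/k needs only rho > 1/2,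
  which the hypothesis on rho implies.
*)

section \<open>Determinants and characteristic polynomials\<close>

lemma det_one_plus_mult_commute:
  fixes U W :: "'a :: idom mat"
  assumes U: "U \<in> carrier_mat n m" and W: "W \<in> carrier_mat m n"
  shows "Determinant.det (1\<^sub>m n + U * W) = Determinant.det (1\<^sub>m m + W * U)"
proof -
  let ?M = "four_block_mat (1\<^sub>m n) (-U) W (1\<^sub>m m)"
  let ?lower = "four_block_mat (1\<^sub>m n) (0\<^sub>m n m) W (1\<^sub>m m)"
  have lower: "?lower \<in> carrier_mat (n + m) (n + m)" using W by auto
  have det_lower: "Determinant.det ?lower = 1"
    by (subst det_four_block_mat_upper_right_zero[where n=n and m=m]) (use W in auto)
  have "?M = ?lower * four_block_mat (1\<^sub>m n) (-U) (0\<^sub>m m n) (1\<^sub>m m + W * U)"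
    by (subst mult_four_block_mat[where ?nr1.0=n and ?n1.0=n and ?n2.0=m and ?nr2.0=m
          and ?nc1.0=n and ?nc2.0=m])
      (use U W in \<open>auto simp: algebra_simps\<close>)
  also have "Determinant.det \<dots> = Determinant.det (1\<^sub>m m + W * U)"
    by (subst det_mult[of _ "n + m"], use U W lower in auto)
      (subst det_four_block_mat_lower_left_zero[where n=n and m=m], use U W det_lower in auto)
  finally have WU: "Determinant.det ?M = Determinant.det (1\<^sub>m m + W * U)" .
  have "?M = four_block_mat (1\<^sub>m n + U * W) (-U) (0\<^sub>m m n) (1\<^sub>m m) * ?lower"
    by (subst mult_four_block_mat[where ?nr1.0=n and ?n1.0=n and ?n2.0=m and ?nr2.0=m
          and ?nc1.0=n and ?nc2.0=m])
      (use U W in \<open>auto simp: algebra_simps\<close>)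
  also have "Determinant.det \<dots> = Determinant.det (1\<^sub>m n + U * W)"
    by (subst det_mult[of _ "n + m"], use U W lower in auto)
      (subst det_four_block_mat_lower_left_zero[where n=n and m=m], use U W det_lower in auto)
  finally show ?thesis using WU by simp
qed

lemma det_diagonal_minus_rank_one:
  fixes e w :: "nat \<Rightarrow> 'a :: field"
  assumes e: "\<And>i. i < k \<Longrightarrow> e i \<noteq> 0"
  shows "Determinant.det (Matrix.mat k k (\<lambda>(i, j). (if i = j then e i else 0) - c * w i * w j))
           = (\<Prod>i<k. e i) * (1 - c * (\<Sum>i<k. w i ^ 2 / e i))"
proof -
  define E where "E = Matrix.mat k k (\<lambda>(i, j). if i = j then e i else 0)"
  define U where "U = Matrix.mat k 1 (\<lambda>(i, j). - c * w i / e i)"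
  define W where "W = Matrix.mat 1 k (\<lambda>(i, j). w j)"
  have E: "E \<in> carrier_mat k k" and U: "U \<in> carrier_mat k 1" and W: "W \<in> carrier_mat 1 k"
    unfolding E_def U_def W_def by auto
  have "Matrix.mat k k (\<lambda>(i, j). (if i = j then e i else 0) - c * w i * w j) = E * (1\<^sub>m k + U * W)"
  proof (rule eq_matI)
    fix i j assume "i < dim_row (E * (1\<^sub>m k + U * W))" "j < dim_col (E * (1\<^sub>m k + U * W))"
    then have i: "i < k" and j: "j < k" using E W by auto
    have "(E * (1\<^sub>m k + U * W)) $$ (i, j) = e i * (1\<^sub>m k + U * W) $$ (i, j)"
      using i j E U W
      by (simp add: scalar_prod_def E_def if_distrib[of "\<lambda>x. x * _"] sum.delta cong: if_cong)
    also have "\<dots> = (if i = j then e i else 0) - c * w i * w j"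
      using i j U W e[OF i] by (simp add: scalar_prod_def U_def W_def field_simps)
    finally show "Matrix.mat k k (\<lambda>(i, j). (if i = j then e i else 0) - c * w i * w j) $$ (i, j)
                    = (E * (1\<^sub>m k + U * W)) $$ (i, j)"
      using i j by simp
  qed (use E W in auto)
  also have "Determinant.det \<dots> = Determinant.det E * Determinant.det (1\<^sub>m 1 + W * U)"
    using E U W by (simp add: det_mult[of _ k] det_one_plus_mult_commute[OF U W])
  also have "Determinant.det E = (\<Prod>i<k. e i)"
    by (subst det_upper_triangular[of _ k])
      (auto simp: E_def upper_triangular_def diag_mat_def prod.list_conv_set_nth atLeast0LessThan)
  also have "Determinant.det (1\<^sub>m 1 + W * U) = 1 - c * (\<Sum>i<k. w i ^ 2 / e i)"
    using W U by (subst det_upper_triangular[of _ 1])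
      (auto simp: upper_triangular_def diag_mat_def scalar_prod_def U_def W_def sum_distrib_left
        power2_eq_square atLeast0LessThan sum_negf field_simps)
  finally show ?thesis .
qed

lemma poly_char_poly:
  fixes A :: "'a :: field mat"
  assumes "A \<in> carrier_mat m m"
  shows "poly (char_poly A) x = Determinant.det (x \<cdot>\<^sub>m 1\<^sub>m m - A)"
proof -
  have "- char_matrix A x = x \<cdot>\<^sub>m 1\<^sub>m m - A"
    using assms unfolding char_matrix_def by (intro eq_matI) auto
  then show ?thesis using char_poly_matrix[OF assms] by simp
qed

lemma poly_eqI_off_point:
  fixes p q :: "'a :: {idom, ring_char_0} poly"
  assumes "\<And>x. x \<noteq> a \<Longrightarrow> poly p x = poly q x"
  shows "p = q"
proof (rule ccontr)
  assume "p \<noteq> q"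
  then have "finite {x. poly (p - q) x = 0}" by (intro poly_roots_finite) simp
  moreover have "UNIV - {a} \<subseteq> {x. poly (p - q) x = 0}" using assms by auto
  ultimately have "finite (UNIV - {a})" by (rule finite_subset[rotated])
  then show False by (simp add: infinite_UNIV_char_0)
qed

lemma smult_one_mat_mult_vec:
  fixes v :: "'a :: comm_ring_1 Matrix.vec"
  assumes "v \<in> carrier_vec n"
  shows "(a \<cdot>\<^sub>m 1\<^sub>m n) *\<^sub>v v = a \<cdot>\<^sub>v v"
  using assms
  by (intro eq_vecI)
    (auto simp: scalar_prod_def if_distrib[of "\<lambda>x. x * _"] if_distrib[of "\<lambda>x. _ * x"] sum.delta
      cong: if_cong)


section \<open>Spectra of real symmetric matrices\<close>

lemma real_symmetric_eigenvalue_real: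
  fixes A :: "real mat"
  assumes A: "A \<in> carrier_mat m m" and sym: "transpose_mat A = A"
    and root: "poly (char_poly (map_mat complex_of_real A)) a = 0"
  shows "a \<in> \<real>"
proof -
  let ?A = "map_mat complex_of_real A"
  have "eigenvalue ?A a" using eigenvalue_root_char_poly[of ?A m] A root by simp
  then obtain v where v: "v \<in> carrier_vec m" "v \<noteq> 0\<^sub>v m" "?A *\<^sub>v v = a \<cdot>\<^sub>v v"
    unfolding eigenvalue_def eigenvector_def using A by auto
  have A_sym: "A $$ (i, j) = A $$ (j, i)" if "i < m" "j < m" for i j
    using sym A that by (metis carrier_matD index_transpose_mat(1))
  define Q where "Q = (\<Sum>i<m. cnj (v $ i) * (\<Sum>j<m. complex_of_real (A $$ (i, j)) * v $ j))"
  define P where "P = (\<Sum>i<m. cnj (v $ i) * v $ i)"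
  \<comment> \<open>The Hermitian form \<open>Q = v\<^sup>* A v\<close> is real because \<open>A\<close> is real symmetric, and \<open>Q = a \<parallel>v\<parallel>\<^sup>2\<close>.\<close>
  have "Q = (\<Sum>i<m. cnj (v $ i) * (?A *\<^sub>v v) $ i)"
    unfolding Q_def using A v(1) by (auto simp: scalar_prod_def atLeast0LessThan intro!: sum.cong)
  then have Q_eq: "Q = a * P"
    unfolding v(3) P_def using v(1) by (auto simp: sum_distrib_left intro!: sum.cong)
  have "cnj Q = (\<Sum>i<m. \<Sum>j<m. v $ i * complex_of_real (A $$ (i, j)) * cnj (v $ j))"
    unfolding Q_def by (simp add: sum_distrib_left mult.assoc)
  also have "\<dots> = (\<Sum>j<m. \<Sum>i<m. v $ i * complex_of_real (A $$ (i, j)) * cnj (v $ j))"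
    by (rule sum.swap)
  also have "\<dots> = Q" unfolding Q_def by (auto simp: sum_distrib_left A_sym mult_ac intro!: sum.cong)
  finally have Q_real: "cnj Q = Q" .
  obtain i where i: "i < m" "v $ i \<noteq> 0" using v(1,2) by (metis carrier_vecD eq_vecI index_zero_vec)
  have "Re P = (\<Sum>i<m. (Re (v $ i))\<^sup>2 + (Im (v $ i))\<^sup>2)"
    unfolding P_def by (simp add: Re_sum power2_eq_square)
  also have "\<dots> > 0" by (rule sum_pos2[of _ i]) (use i complex_neq_0 in auto)
  finally have "P \<noteq> 0" by auto
  have "cnj P = P" unfolding P_def by (simp add: mult.commute)
  then have "cnj a * P = a * P" using Q_eq Q_real by (metis complex_cnj_mult)
  then have "cnj a = a" using \<open>P \<noteq> 0\<close> by simp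
  then show ?thesis using Reals_cnj_iff by blast
qed

lemma real_symmetric_char_poly_splits:
  fixes A :: "real mat"
  assumes A: "A \<in> carrier_mat m m" and sym: "transpose_mat A = A"
  obtains ys where "length ys = m" "char_poly A = (\<Prod>y\<leftarrow>ys. [:- y, 1:])"
proof -
  let ?A = "map_mat complex_of_real A"
  obtain as where as: "char_poly ?A = (\<Prod>a\<leftarrow>as. [:- a, 1:])" "length as = m"
    using char_poly_factorized[of ?A m] A by auto
  have real: "a \<in> \<real>" if "a \<in> set as" for a
    using real_symmetric_eigenvalue_real[OF A sym] that unfolding as(1)
    by (simp add: poly_prod_list_zero_iff)
  interpret of_real_poly: map_poly_inj_comm_ring_hom complex_of_real ..
  have "map_poly complex_of_real (\<Prod>y\<leftarrow>map Re as. [:- y, 1:])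
          = (\<Prod>y\<leftarrow>map Re as. map_poly complex_of_real [:- y, 1:])"
    by (simp add: of_real_poly.hom_prod_list o_def)
  also have "\<dots> = (\<Prod>a\<leftarrow>as. [:- a, 1:])"
    using real by (induction as) (auto simp: map_poly_pCons complex_is_Real_iff)
  also have "\<dots> = map_poly complex_of_real (char_poly A)"
    unfolding as(1)[symmetric] by (rule of_real_hom.char_poly_hom[OF A])
  finally have "char_poly A = (\<Prod>y\<leftarrow>map Re as. [:- y, 1:])" by simp
  then show ?thesis using that[of "map Re as"] as(2) by simp
qed

lemma proots_prod_linear: "proots (\<Prod>y\<leftarrow>ys. [:- y, 1:]) = mset (ys :: 'a :: idom list)"
proof (induction ys)
  case (Cons y ys)
  have "(\<Prod>x\<leftarrow>ys. [:- x, 1:]) \<noteq> 0" by (auto simp: prod_list_zero_iff)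
  then show ?case using Cons.IH by (subst list.map, subst prod_list.Cons, subst proots_mult) auto
qed simp

lemma eigs_desc_eqI:
  fixes M :: "real mat"
  assumes "length xs = dim_row M" "sorted_wrt (\<ge>) xs" "char_poly M = (\<Prod>x\<leftarrow>xs. [:- x, 1:])"
  shows "eigs_desc M = xs"
  unfolding eigs_desc_def
proof (rule the_equality)
  fix ys assume ys: "length ys = dim_row M \<and> sorted_wrt (\<ge>) ys \<and> char_poly M = (\<Prod>y\<leftarrow>ys. [:- y, 1:])"
  then have "mset ys = mset xs"
    using assms(3) by (metis proots_prod_linear)
  then have "mset (rev ys) = mset (rev xs)" by simp
  moreover have "sorted (rev ys)" "sorted (rev xs)"
    using ys assms(2) by (simp_all add: sorted_wrt_rev)
  ultimately have "rev ys = rev xs" by (metis properties_for_sort)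
  then show "ys = xs" by simp
qed (use assms in auto)

lemma eigs_desc_real_symmetric:
  fixes A :: "real mat"
  assumes A: "A \<in> carrier_mat m m" and sym: "transpose_mat A = A"
  shows "length (eigs_desc A) = m" "sorted_wrt (\<ge>) (eigs_desc A)"
    and "char_poly A = (\<Prod>y\<leftarrow>eigs_desc A. [:- y, 1:])"
proof -
  obtain ys where ys: "length ys = m" "char_poly A = (\<Prod>y\<leftarrow>ys. [:- y, 1:])"
    using real_symmetric_char_poly_splits[OF A sym] .
  have "(\<Prod>y\<leftarrow>ys. [:- y, 1:]) = (\<Prod>y\<leftarrow>rev (sort ys). [:- y, 1:])"
    by (simp flip: prod_mset_prod_list)
  then have "eigs_desc A = rev (sort ys)"
    using ys A by (intro eigs_desc_eqI) (auto simp: sorted_wrt_rev)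
  then show "length (eigs_desc A) = m" "sorted_wrt (\<ge>) (eigs_desc A)"
    and "char_poly A = (\<Prod>y\<leftarrow>eigs_desc A. [:- y, 1:])"
    using ys \<open>(\<Prod>y\<leftarrow>ys. [:- y, 1:]) = _\<close> by (auto simp: sorted_wrt_rev)
qed

lemma eig_antimono:
  fixes A :: "real mat"
  assumes "A \<in> carrier_mat m m" "transpose_mat A = A" "1 \<le> i" "i \<le> j" "j \<le> m"
  shows "eig A j \<le> eig A i"
proof (cases "i = j")
  case False
  have "length (eigs_desc A) = m" "sorted_wrt (\<ge>) (eigs_desc A)"
    using eigs_desc_real_symmetric[OF assms(1,2)] by auto
  then show ?thesis
    unfolding eig_def using False assms(3-) by (auto intro: sorted_wrt_nth_less)
qed simp

lemma transpose_shifted_symmetric: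
  assumes "B \<in> carrier_mat k k" "transpose_mat B = B"
  shows "transpose_mat (\<alpha> \<cdot>\<^sub>m 1\<^sub>m k - B) = \<alpha> \<cdot>\<^sub>m 1\<^sub>m k - B"
proof -
  have "B $$ (j, i) = B $$ (i, j)" if "i < k" "j < k" for i j
    using that assms by (metis carrier_matD index_transpose_mat(1))
  then show ?thesis using assms(1) by (intro eq_matI) auto
qed


section \<open>Compression by a matrix with orthonormal columns\<close>

locale compression =
  fixes T B :: "real mat" and n k :: nat and \<alpha> :: real
  assumes T: "T \<in> carrier_mat n k" and TT: "T\<^sup>T * T = 1\<^sub>m k" and B: "B \<in> carrier_mat k k"
begin

abbreviation L where "L \<equiv> \<alpha> \<cdot>\<^sub>m 1\<^sub>m n - T * B * T\<^sup>T"
abbreviation C where "C \<equiv> \<alpha> \<cdot>\<^sub>m 1\<^sub>m k - B"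

lemma transpose_mult_mult_vec:
  assumes "r \<in> carrier_vec k"
  shows "T\<^sup>T *\<^sub>v (T *\<^sub>v r) = r"
  using T assms TT by (subst assoc_mult_mat_vec[of _ k n, symmetric]) auto

lemma compression_mult_vec:
  assumes v: "v \<in> carrier_vec n"
  shows "L *\<^sub>v v = \<alpha> \<cdot>\<^sub>v v - T *\<^sub>v (B *\<^sub>v (T\<^sup>T *\<^sub>v v))"
proof -
  have "(T * B * T\<^sup>T) *\<^sub>v v = (T * B) *\<^sub>v (T\<^sup>T *\<^sub>v v)"
    by (rule assoc_mult_mat_vec[of _ n k]) (use T B v in auto)
  also have "\<dots> = T *\<^sub>v (B *\<^sub>v (T\<^sup>T *\<^sub>v v))"
    by (rule assoc_mult_mat_vec[of _ n k]) (use T B v in auto)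
  finally show ?thesis
    using T B v by (subst minus_mult_distrib_mat_vec[of _ n n]) (auto simp: smult_one_mat_mult_vec)
qed

lemma compression_mult_range:
  assumes r: "r \<in> carrier_vec k"
  shows "L *\<^sub>v (T *\<^sub>v r) = T *\<^sub>v (C *\<^sub>v r)"
proof -
  have "L *\<^sub>v (T *\<^sub>v r) = \<alpha> \<cdot>\<^sub>v (T *\<^sub>v r) - T *\<^sub>v (B *\<^sub>v r)"
    using T r by (simp add: compression_mult_vec transpose_mult_mult_vec)
  also have "\<dots> = T *\<^sub>v (\<alpha> \<cdot>\<^sub>v r - B *\<^sub>v r)"
    using T B r by (simp add: mult_minus_distrib_mat_vec[of _ n k] mult_mat_vec[of _ n k])
  also have "\<alpha> \<cdot>\<^sub>v r - B *\<^sub>v r = C *\<^sub>v r"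
    using B r by (subst minus_mult_distrib_mat_vec[of _ k k]) (auto simp: smult_one_mat_mult_vec)
  finally show ?thesis .
qed

lemma transpose_mult_compression:
  assumes v: "v \<in> carrier_vec n"
  shows "T\<^sup>T *\<^sub>v (L *\<^sub>v v) = C *\<^sub>v (T\<^sup>T *\<^sub>v v)"
proof -
  have u: "T\<^sup>T *\<^sub>v v \<in> carrier_vec k" using T v by auto
  have "T\<^sup>T *\<^sub>v (L *\<^sub>v v)
          = \<alpha> \<cdot>\<^sub>v (T\<^sup>T *\<^sub>v v) - T\<^sup>T *\<^sub>v (T *\<^sub>v (B *\<^sub>v (T\<^sup>T *\<^sub>v v)))"
    unfolding compression_mult_vec[OF v]
    using T B v by (simp add: mult_minus_distrib_mat_vec[of _ k n] mult_mat_vec[of _ k n])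
  also have "\<dots> = \<alpha> \<cdot>\<^sub>v (T\<^sup>T *\<^sub>v v) - B *\<^sub>v (T\<^sup>T *\<^sub>v v)"
    using B u by (simp add: transpose_mult_mult_vec)
  also have "\<dots> = C *\<^sub>v (T\<^sup>T *\<^sub>v v)"
    using B u by (subst minus_mult_distrib_mat_vec[of _ k k]) (auto simp: smult_one_mat_mult_vec)
  finally show ?thesis .
qed

lemma compression_eigenvector_in_range:
  assumes v: "v \<in> carrier_vec n" and ev: "L *\<^sub>v v = \<mu> \<cdot>\<^sub>v v" and ne: "\<mu> \<noteq> \<alpha>"
  shows "T *\<^sub>v (T\<^sup>T *\<^sub>v v) = v"
proof -
  have ev': "\<alpha> \<cdot>\<^sub>v v - T *\<^sub>v (B *\<^sub>v (T\<^sup>T *\<^sub>v v)) = \<mu> \<cdot>\<^sub>v v"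
    using ev unfolding compression_mult_vec[OF v] .
  define y where "y = (1 / (\<alpha> - \<mu>)) \<cdot>\<^sub>v (B *\<^sub>v (T\<^sup>T *\<^sub>v v))"
  have y: "y \<in> carrier_vec k" unfolding y_def using B T v by auto
  have "v = T *\<^sub>v y"
  proof (rule eq_vecI)
    fix i assume "i < dim_vec (T *\<^sub>v y)"
    then have i: "i < n" using T by auto
    have "\<alpha> * v $ i - (T *\<^sub>v (B *\<^sub>v (T\<^sup>T *\<^sub>v v))) $ i = \<mu> * v $ i"
      using arg_cong[OF ev', of "\<lambda>w. w $ i"] i v T B by simp
    then show "v $ i = (T *\<^sub>v y) $ i"
      unfolding y_def using i T B v ne by (simp add: mult_mat_vec[of _ n k] field_simps)
  qed (use v T in auto)
  then show ?thesis using transpose_mult_mult_vec[OF y] by simp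
qed

lemma char_poly_compression:
  assumes "k \<le> n"
  shows "char_poly L = [:- \<alpha>, 1:] ^ (n - k) * char_poly C"
proof (rule poly_eqI_off_point)
  fix x assume "x \<noteq> \<alpha>"
  define t where "t = x - \<alpha>"
  have t: "t \<noteq> 0" using \<open>x \<noteq> \<alpha>\<close> unfolding t_def by auto
  \<comment> \<open>Sylvester's identity moves the rank-\<open>k\<close> perturbation from dimension \<open>n\<close> down to \<open>k\<close>.\<close>
  define W where "W = (1 / t) \<cdot>\<^sub>m (B * T\<^sup>T)"
  have W: "W \<in> carrier_mat k n" unfolding W_def using B T by auto
  have TW: "T * W = (1 / t) \<cdot>\<^sub>m (T * B * T\<^sup>T)" unfolding W_def
    using T B
    by (subst mult_smult_distrib[of _ n k _ n]) (auto simp: assoc_mult_mat[of _ n k _ k _ n])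
  have WT: "W * T = (1 / t) \<cdot>\<^sub>m B" unfolding W_def
    using T B TT
    by (subst mult_smult_assoc_mat[of _ k n _ k]) (auto simp: assoc_mult_mat[of _ k k _ n _ k])
  have shift_L: "x \<cdot>\<^sub>m 1\<^sub>m n - L = t \<cdot>\<^sub>m (1\<^sub>m n + T * W)"
    unfolding TW using T B t by (intro eq_matI) (auto simp: t_def field_simps)
  have shift_C: "1\<^sub>m k + W * T = (1 / t) \<cdot>\<^sub>m (x \<cdot>\<^sub>m 1\<^sub>m k - C)"
    unfolding WT using B t by (intro eq_matI) (auto simp: t_def field_simps)
  have Cc: "C \<in> carrier_mat k k" using B by auto
  have Lc: "L \<in> carrier_mat n n" using T B by auto
  have "poly (char_poly L) x = Determinant.det (t \<cdot>\<^sub>m (1\<^sub>m n + T * W))"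
    unfolding poly_char_poly[OF Lc] shift_L ..
  also have "\<dots> = t ^ n * Determinant.det (1\<^sub>m n + T * W)" using T W by simp
  also have "\<dots> = t ^ n * Determinant.det (1\<^sub>m k + W * T)"
    by (simp add: det_one_plus_mult_commute[OF T W])
  also have "\<dots> = t ^ n * ((1 / t) ^ k * poly (char_poly C) x)"
    unfolding shift_C poly_char_poly[OF Cc] using B by simp
  also have "\<dots> = t ^ (n - k) * poly (char_poly C) x"
    using t \<open>k \<le> n\<close> by (simp add: power_diff power_one_over field_simps)
  finally show "poly (char_poly L) x = poly ([:- \<alpha>, 1:] ^ (n - k) * char_poly C) x"
    by (simp add: t_def)
qed

lemma bottom_eigvecs_compression_lift:
  assumes evals: "\<And>j. j < m \<Longrightarrow> eig L (n - j) = eig C (k - j)"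
    and R: "is_bottom_eigvecs C m R"
  shows "is_bottom_eigvecs L m (T * R)"
proof -
  from R have Rc: "R \<in> carrier_mat k m" and RR: "transpose_mat R * R = 1\<^sub>m m"
    and evR: "\<And>j. j < m \<Longrightarrow> C *\<^sub>v col R j = eig C (k - j) \<cdot>\<^sub>v col R j"
    unfolding is_bottom_eigvecs_def using B by auto
  have "transpose_mat (T * R) * (T * R) = transpose_mat R * ((T\<^sup>T * T) * R)"
    using T Rc
    by (simp add: transpose_mult[of _ n k] assoc_mult_mat[of _ m k _ n _ m] assoc_mult_mat[of _ k n _ k _ m])
  then have orth: "transpose_mat (T * R) * (T * R) = 1\<^sub>m m" using TT RR Rc by simp
  have "L *\<^sub>v col (T * R) j = eig L (n - j) \<cdot>\<^sub>v col (T * R) j" if j: "j < m" for j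
  proof -
    have r: "col R j \<in> carrier_vec k" using Rc j by auto
    have c: "col (T * R) j = T *\<^sub>v col R j" by (rule col_mult2[of _ n k _ m]) (use T Rc j in auto)
    have "L *\<^sub>v (T *\<^sub>v col R j) = T *\<^sub>v (eig C (k - j) \<cdot>\<^sub>v col R j)"
      unfolding compression_mult_range[OF r] evR[OF j] ..
    also have "\<dots> = eig C (k - j) \<cdot>\<^sub>v (T *\<^sub>v col R j)" by (rule mult_mat_vec[OF T r])
    finally show ?thesis using evals[OF j] c by simp
  qed
  then show ?thesis unfolding is_bottom_eigvecs_def using T Rc orth by auto
qed

lemma bottom_eigvecs_compression_descend:
  assumes evals: "\<And>j. j < m \<Longrightarrow> eig L (n - j) = eig C (k - j)"
    and ne: "\<And>j. j < m \<Longrightarrow> eig L (n - j) \<noteq> \<alpha>"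
    and V: "is_bottom_eigvecs L m V"
  shows "V = T * (T\<^sup>T * V)" and "is_bottom_eigvecs C m (T\<^sup>T * V)"
proof -
  define R where "R = T\<^sup>T * V"
  from V have Vc: "V \<in> carrier_mat n m" and VV: "transpose_mat V * V = 1\<^sub>m m"
    and evV: "\<And>j. j < m \<Longrightarrow> L *\<^sub>v col V j = eig L (n - j) \<cdot>\<^sub>v col V j"
    unfolding is_bottom_eigvecs_def using T B by auto
  have Rc: "R \<in> carrier_mat k m" unfolding R_def using T Vc by auto
  have colR: "col R j = T\<^sup>T *\<^sub>v col V j" if "j < m" for j
    unfolding R_def by (rule col_mult2[of _ k n _ m]) (use that Vc T in auto)
  show VTR: "V = T * R"
  proof (rule mat_col_eqI)
    fix j assume "j < dim_col (T * R)"
    then have j: "j < m" using Rc by auto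
    have "col (T * R) j = T *\<^sub>v (T\<^sup>T *\<^sub>v col V j)"
      using colR[OF j] by (subst col_mult2[of _ n k _ m]) (use T Rc j in auto)
    also have "\<dots> = col V j"
      by (rule compression_eigenvector_in_range[OF _ evV[OF j] ne[OF j]]) (use Vc j in auto)
    finally show "col V j = col (T * R) j" by simp
  qed (use Vc Rc T in auto)
  have "transpose_mat R * R = transpose_mat V * (T * R)"
    unfolding R_def using T Vc
    by (simp add: transpose_mult[of _ k n] assoc_mult_mat[of _ m n _ k _ m])
  then have orth: "transpose_mat R * R = 1\<^sub>m m" using VTR VV by simp
  have "C *\<^sub>v col R j = eig C (k - j) \<cdot>\<^sub>v col R j" if j: "j < m" for j
  proof -
    have v: "col V j \<in> carrier_vec n" using Vc j by auto
    have "C *\<^sub>v col R j = T\<^sup>T *\<^sub>v (eig L (n - j) \<cdot>\<^sub>v col V j)"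
      unfolding colR[OF j] transpose_mult_compression[OF v, symmetric] evV[OF j] ..
    also have "\<dots> = eig L (n - j) \<cdot>\<^sub>v col R j"
      unfolding colR[OF j] by (rule mult_mat_vec[of _ k n]) (use T v in auto)
    finally show ?thesis using evals[OF j] by simp
  qed
  then show "is_bottom_eigvecs C m R" unfolding is_bottom_eigvecs_def using B Rc orth by auto
qed

lemma bottom_eigvecs_compression_iff:
  assumes "\<And>j. j < m \<Longrightarrow> eig L (n - j) = eig C (k - j)"
    and "\<And>j. j < m \<Longrightarrow> eig L (n - j) \<noteq> \<alpha>"
  shows "is_bottom_eigvecs L m V \<longleftrightarrow> (\<exists>R. is_bottom_eigvecs C m R \<and> V = T * R)"
  using bottom_eigvecs_compression_lift[OF assms(1)] bottom_eigvecs_compression_descend[OF assms]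
  by metis

lemma eigs_desc_compression:
  assumes sym: "transpose_mat B = B" and k: "2 \<le> k" "k \<le> n"
    and top: "\<alpha> \<le> eig C 1" and second: "eig C 2 \<le> \<alpha>"
  shows "eigs_desc L = hd (eigs_desc C) # replicate (n - k) \<alpha> @ tl (eigs_desc C)"
proof -
  define ys where "ys = eigs_desc C"
  have "C \<in> carrier_mat k k" using B by auto
  from eigs_desc_real_symmetric[OF this transpose_shifted_symmetric[OF B sym]]
  have ys: "length ys = k" "sorted_wrt (\<ge>) ys" "char_poly C = (\<Prod>y\<leftarrow>ys. [:- y, 1:])"
    unfolding ys_def by auto
  then obtain y0 y1 zs where ys_eq: "ys = y0 # y1 # zs"
    using k by (auto simp: numeral_2_eq_2 Suc_le_length_iff)
  have "y0 \<ge> \<alpha>" "y1 \<le> \<alpha>" using top second unfolding eig_def ys_def[symmetric] ys_eq by simp_all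
  moreover have "sorted_wrt (\<ge>) (replicate r \<alpha>)" for r by (induction r) auto
  ultimately have sorted: "sorted_wrt (\<ge>) (y0 # replicate (n - k) \<alpha> @ y1 # zs)"
    using ys(2) unfolding ys_eq by (auto simp: sorted_wrt_append)
  have "char_poly L = (\<Prod>y\<leftarrow>y0 # replicate (n - k) \<alpha> @ y1 # zs. [:- y, 1:])"
    unfolding char_poly_compression[OF k(2)] ys(3) ys_eq
    by (simp only: list.map prod_list.Cons map_append prod_list.append map_replicate
        prod_list_replicate mult_ac)
  then have "eigs_desc L = y0 # replicate (n - k) \<alpha> @ y1 # zs"
    using sorted ys(1) k T B unfolding ys_eq by (intro eigs_desc_eqI) auto
  then show ?thesis unfolding ys_def[symmetric] ys_eq by simp
qed

lemma eig_compression: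
  assumes sym: "transpose_mat B = B" and k: "2 \<le> k" "k \<le> n"
    and top: "\<alpha> \<le> eig C 1" and second: "eig C 2 \<le> \<alpha>"
  shows "\<And>j. j < k - 1 \<Longrightarrow> eig L (n - j) = eig C (k - j)"
    and "\<alpha> \<le> eig L (n - k + 1)"
    and "eig L (n - k + 2) = eig C 2"
proof -
  define ys where "ys = eigs_desc C"
  have eigs_L: "eigs_desc L = hd ys # replicate (n - k) \<alpha> @ tl ys"
    unfolding ys_def by (rule eigs_desc_compression[OF assms])
  have "C \<in> carrier_mat k k" using B by auto
  then have "length ys = k"
    unfolding ys_def
    by (rule eigs_desc_real_symmetric(1)[OF _ transpose_shifted_symmetric[OF B sym]])
  then obtain y0 y1 zs where ys_eq: "ys = y0 # y1 # zs"
    using k by (auto simp: numeral_2_eq_2 Suc_le_length_iff)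
  show "eig L (n - j) = eig C (k - j)" if "j < k - 1" for j
  proof -
    define i where "i = k - j - 2"
    have "n - j - 1 = Suc (n - k + i)" "k - j - 1 = Suc i" using that k unfolding i_def by linarith+
    moreover have "(hd ys # replicate (n - k) \<alpha> @ tl ys) ! Suc (n - k + i) = tl ys ! i"
      by (simp add: nth_append)
    ultimately show ?thesis
      unfolding eig_def eigs_L ys_def[symmetric] by (simp add: ys_eq)
  qed
  show "\<alpha> \<le> eig L (n - k + 1)"
    using top unfolding eig_def eigs_L ys_def[symmetric] ys_eq
    by (cases "n - k") (auto simp: nth_append nth_Cons')
  show "eig L (n - k + 2) = eig C 2"
    unfolding eig_def eigs_L ys_def[symmetric] ys_eq by (simp add: nth_append)
qed

lemma compression_bottom_spectrum:
  assumes sym: "transpose_mat B = B" and k: "2 \<le> k" "k \<le> n"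
    and top: "\<alpha> \<le> eig C 1" and second: "eig C 2 < \<alpha>"
  shows "is_bottom_eigvecs L (k - 1) V \<longleftrightarrow> (\<exists>R. is_bottom_eigvecs C (k - 1) R \<and> V = T * R)"
    and "\<alpha> \<le> eig L (n - k + 1)"
    and "eig L (n - k + 2) = eig C 2"
proof -
  note spectrum = eig_compression[OF sym k top less_imp_le[OF second]]
  have "eig L (n - j) \<noteq> \<alpha>" if "j < k - 1" for j
  proof -
    have "C \<in> carrier_mat k k" using B by auto
    then have "eig C (k - j) \<le> eig C 2"
      using that by (intro eig_antimono[OF _ transpose_shifted_symmetric[OF B sym]]) auto
    then show ?thesis using spectrum(1)[OF that] second by simp
  qed
  then show "is_bottom_eigvecs L (k - 1) V \<longleftrightarrow> (\<exists>R. is_bottom_eigvecs C (k - 1) R \<and> V = T * R)"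
    using bottom_eigvecs_compression_iff spectrum(1) by blast
  show "\<alpha> \<le> eig L (n - k + 1)" "eig L (n - k + 2) = eig C 2" using spectrum(2,3) .
qed

end


section \<open>The secular equation of a diagonal plus rank-one matrix\<close>

lemma prod_linear_nonpos_imp_le_hd:
  fixes ys :: "'a :: linordered_idom list"
  assumes "sorted_wrt (\<ge>) ys" "ys \<noteq> []" "poly (\<Prod>y\<leftarrow>ys. [:- y, 1:]) x \<le> 0"
  shows "x \<le> hd ys"
proof (rule ccontr)
  assume "\<not> x \<le> hd ys"
  with assms(1,2) have "\<forall>y\<in>set ys. y < x" by (cases ys) auto
  then have "poly (\<Prod>y\<leftarrow>ys. [:- y, 1:]) x > 0"
    by (induction ys) (auto simp: algebra_simps)
  with assms(3) show False by simp
qed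

definition secular :: "nat \<Rightarrow> real \<Rightarrow> (nat \<Rightarrow> real) \<Rightarrow> (nat \<Rightarrow> real) \<Rightarrow> real \<Rightarrow> real" where
  "secular k c N d x = 1 - c * (\<Sum>i<k. N i / (x - d i))"

lemma secular_strict_mono:
  assumes "c > 0" "0 < k" "\<And>i. i < k \<Longrightarrow> N i > 0" "\<And>i. i < k \<Longrightarrow> d i < x" "x < y"
  shows "secular k c N d x < secular k c N d y"
proof -
  have "(\<Sum>i<k. N i / (y - d i)) < (\<Sum>i<k. N i / (x - d i))"
  proof (rule sum_strict_mono)
    fix i assume "i \<in> {..<k}"
    then have "0 < x - d i" "x - d i < y - d i" "0 < N i" using assms(3-) by auto
    then show "N i / (y - d i) < N i / (x - d i)"
      by (intro divide_strict_left_mono) auto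
  qed (use assms(2) in auto)
  then show ?thesis using assms(1) unfolding secular_def by simp
qed

lemma secular_has_derivative:
  assumes "\<And>i. i < k \<Longrightarrow> d i \<noteq> r"
  shows "(secular k c N d has_real_derivative c * (\<Sum>i<k. N i / (r - d i)\<^sup>2)) (at r)"
proof -
  have "((\<lambda>x. N i / (x - d i)) has_real_derivative - (N i / (r - d i)\<^sup>2)) (at r)" if "i < k" for i
    using assms[OF that] by (auto intro!: derivative_eq_intros simp: power2_eq_square)
  then have "((\<lambda>x. \<Sum>i<k. N i / (x - d i)) has_real_derivative (\<Sum>i<k. - (N i / (r - d i)\<^sup>2))) (at r)"
    by (intro DERIV_sum) auto
  then have "(secular k c N d has_real_derivative 0 - c * (\<Sum>i<k. - (N i / (r - d i)\<^sup>2))) (at r)"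
    unfolding secular_def by (intro DERIV_diff DERIV_cmult) auto
  then show ?thesis by (simp add: sum_negf)
qed

lemma secular_root_simple:
  fixes f :: "real poly"
  assumes c: "c > 0" and k: "0 < k" and N: "\<And>i. i < k \<Longrightarrow> N i > 0" and d: "\<And>i. i < k \<Longrightarrow> d i \<le> D"
    and f: "\<And>x. D < x \<Longrightarrow> poly f x = (\<Prod>i<k. x - d i) * secular k c N d x"
    and r: "D < r" "secular k c N d r = 0"
  shows "poly (pderiv f) r > 0"
proof -
  define P where "P = (\<Prod>i<k. [:- d i, 1:])"
  define g' where "g' = c * (\<Sum>i<k. N i / (r - d i)\<^sup>2)"
  have poly_P: "poly P x = (\<Prod>i<k. x - d i)" for x unfolding P_def poly_prod by simp
  have dr: "d i < r" if "i < k" for i using d[OF that] r(1) by simp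
  have "((\<lambda>x. poly P x * secular k c N d x) has_real_derivative
          poly (pderiv P) r * secular k c N d r + g' * poly P r) (at r)"
    unfolding g'_def by (intro DERIV_mult poly_DERIV secular_has_derivative) (use dr in fastforce)
  then have "((\<lambda>x. poly P x * secular k c N d x) has_real_derivative g' * poly P r) (at r)"
    using r(2) by simp
  then have "(poly f has_real_derivative g' * poly P r) (at r)"
    by (rule has_field_derivative_transform_within_open[of _ _ _ "{D<..}"]) (use r f poly_P in auto)
  then have "poly (pderiv f) r = g' * poly P r" using poly_DERIV DERIV_unique by blast
  moreover have "poly P r > 0" unfolding poly_P by (rule prod_pos) (use dr in auto)
  moreover have "0 < N i / (r - d i)\<^sup>2" if "i < k" for i using N[OF that] dr[OF that] by simp
  then have "g' > 0" unfolding g'_def using c k by (intro mult_pos_pos sum_pos) auto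
  ultimately show ?thesis by simp
qed

text \<open>On \<open>(D, \<infinity>)\<close> the roots of the polynomial are the zeros of the strictly increasing
  secular function, so there is at most one, and it is simple.\<close>

lemma secular_second_root_le:
  fixes ys :: "real list"
  assumes c: "c > 0" and k: "0 < k" and N: "\<And>i. i < k \<Longrightarrow> N i > 0" and d: "\<And>i. i < k \<Longrightarrow> d i \<le> D"
    and sorted: "sorted_wrt (\<ge>) ys" and len: "2 \<le> length ys"
    and f: "\<And>x. D < x \<Longrightarrow> poly (\<Prod>y\<leftarrow>ys. [:- y, 1:]) x = (\<Prod>i<k. x - d i) * secular k c N d x"
  shows "ys ! 1 \<le> D"
proof (rule ccontr)
  assume "\<not> ys ! 1 \<le> D"
  moreover obtain r s zs where ys: "ys = r # s # zs"
    using len by (auto simp: numeral_2_eq_2 Suc_le_length_iff)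
  ultimately have rs: "D < s" "s \<le> r" using sorted by auto
  have root: "secular k c N d y = 0" if "y \<in> {r, s}" for y
  proof -
    have "D < y" "poly (\<Prod>y\<leftarrow>ys. [:- y, 1:]) y = 0" using that rs unfolding ys by auto
    then have "(\<Prod>i<k. y - d i) * secular k c N d y = 0" using f[OF \<open>D < y\<close>] by simp
    moreover have "(\<Prod>i<k. y - d i) > 0" using d \<open>D < y\<close> by (intro prod_pos) fastforce
    ultimately show ?thesis by (metis less_irrefl mult_eq_0_iff)
  qed
  have "r = s"
  proof (rule ccontr)
    assume "r \<noteq> s"
    then have "secular k c N d s < secular k c N d r"
      using rs d by (intro secular_strict_mono[OF c k N]) fastforce+
    then show False using root by simp
  qed
  then have double: "(\<Prod>y\<leftarrow>ys. [:- y, 1:]) = [:- r, 1:] * ([:- r, 1:] * (\<Prod>y\<leftarrow>zs. [:- y, 1:]))"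
    unfolding ys by simp
  have "poly (pderiv (\<Prod>y\<leftarrow>ys. [:- y, 1:])) r = 0"
    unfolding double pderiv_mult poly_add poly_mult by simp
  moreover have "poly (pderiv (\<Prod>y\<leftarrow>ys. [:- y, 1:])) r > 0"
    using root rs \<open>r = s\<close> by (intro secular_root_simple[OF c k N d f]) auto
  ultimately show False by simp
qed


section \<open>The expected SSBM matrices\<close>

lemma expectation_bind_bernoulli:
  fixes h :: "'a \<Rightarrow> real"
  assumes "0 \<le> q" "q \<le> 1" "\<And>b. finite (set_pmf (F b))"
  shows "measure_pmf.expectation (bernoulli_pmf q \<bind> F) h
           = q * measure_pmf.expectation (F True) h + (1 - q) * measure_pmf.expectation (F False) h"
  by (subst pmf_expectation_bind[of UNIV]) (auto simp: UNIV_bool assms)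

lemma
  assumes "0 \<le> p" "p \<le> 1" "0 \<le> \<eta>" "\<eta> \<le> 1"
  shows expectation_entry_pmf:
      "measure_pmf.expectation (entry_pmf p \<eta> cl j l) (\<lambda>x. x)
         = p * (1 - 2 * \<eta>) * (if cl j = cl l then 1 else -1)"
    and expectation_abs_entry_pmf:
      "measure_pmf.expectation (entry_pmf p \<eta> cl j l) (\<lambda>x. \<bar>x\<bar>) = p"
  unfolding entry_pmf_def
  by (simp_all add: expectation_bind_bernoulli assms Let_def algebra_simps)

lemma csize_pos:
  assumes "valid_partition n k cl" "i < k"
  shows "csize n cl i > 0"
proof -
  from assms obtain j where "j < n" "cl j = i" unfolding valid_partition_def by auto
  then show ?thesis unfolding csize_def by (auto simp: card_gt_0_iff)
qed

lemma sum_csize: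
  assumes "valid_partition n k cl"
  shows "(\<Sum>i<k. csize n cl i) = n"
proof -
  have "(\<Sum>i<k. csize n cl i) = (\<Sum>i<k. \<Sum>j\<in>{j\<in>{..<n}. cl j = i}. (1::nat))"
    unfolding csize_def by (auto intro!: sum.cong arg_cong[of _ _ card])
  also have "\<dots> = (\<Sum>j<n. 1)"
    by (rule sum.group) (use assms in \<open>auto simp: valid_partition_def\<close>)
  finally show ?thesis by simp
qed

lemma valid_partition_le:
  assumes "valid_partition n k cl"
  shows "k \<le> n"
proof -
  have "(\<Sum>i<k. 1) \<le> (\<Sum>i<k. csize n cl i)"
    by (rule sum_mono) (use csize_pos[OF assms] in \<open>auto simp: Suc_le_eq\<close>)
  then show ?thesis using sum_csize[OF assms] by simp
qed

lemma Theta_carrier: "Theta n k cl \<in> carrier_mat n k"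
  by (simp add: Theta_def)

lemma transpose_Theta_mult_Theta:
  assumes "valid_partition n k cl"
  shows "transpose_mat (Theta n k cl) * Theta n k cl = 1\<^sub>m k"
proof (rule eq_matI)
  fix a b assume ab: "a < dim_row (1\<^sub>m k)" "b < dim_col (1\<^sub>m k)"
  have "(transpose_mat (Theta n k cl) * Theta n k cl) $$ (a, b)
          = (\<Sum>j\<in>{0..<n}. if cl j = a \<and> cl j = b then 1 / real (csize n cl a) else 0)"
    using ab unfolding Theta_def by (auto simp: scalar_prod_def intro!: sum.cong)
  also have "\<dots> = (if a = b then real (csize n cl a) / real (csize n cl a) else 0)"
    by (cases "a = b") (simp_all add: sum.If_cases atLeast0LessThan lessThan_def Int_def csize_def)
  also have "\<dots> = 1\<^sub>m k $$ (a, b)"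
    using csize_pos[OF assms, of a] ab by auto
  finally show "(transpose_mat (Theta n k cl) * Theta n k cl) $$ (a, b) = 1\<^sub>m k $$ (a, b)" .
qed (auto simp: Theta_def)

lemma EDbar_eq:
  assumes "0 \<le> p" "p \<le> 1" "0 \<le> \<eta>" "\<eta> \<le> 1"
  shows "EDbar n p \<eta> cl = dbar n p \<cdot>\<^sub>m 1\<^sub>m n"
proof (rule eq_matI)
  fix i j assume "i < dim_row (dbar n p \<cdot>\<^sub>m 1\<^sub>m n)" "j < dim_col (dbar n p \<cdot>\<^sub>m 1\<^sub>m n)"
  moreover from this have "real (card ({..<n} - {i})) = real n - 1" by (simp add: of_nat_diff)
  ultimately show "EDbar n p \<eta> cl $$ (i, j) = (dbar n p \<cdot>\<^sub>m 1\<^sub>m n) $$ (i, j)"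
    unfolding EDbar_def dbar_def by (simp add: expectation_abs_entry_pmf assms)
qed (auto simp: EDbar_def)

lemma Lsym_eq_EA:
  assumes "n \<ge> 1" "0 \<le> p" "p \<le> 1" "0 \<le> \<eta>" "\<eta> \<le> 1"
  shows "Lsym n p \<eta> cl = 1\<^sub>m n - (1 / dbar n p) \<cdot>\<^sub>m EA n p \<eta> cl"
proof -
  define s where "s = 1 / sqrt (dbar n p)"
  have EA: "EA n p \<eta> cl \<in> carrier_mat n n" by (simp add: EA_def)
  have "diag_inv_sqrt (EDbar n p \<eta> cl) = s \<cdot>\<^sub>m 1\<^sub>m n"
    unfolding EDbar_eq[OF assms(2-)] diag_inv_sqrt_def s_def by (rule eq_matI) auto
  moreover have "s \<cdot>\<^sub>m 1\<^sub>m n * EA n p \<eta> cl * (s \<cdot>\<^sub>m 1\<^sub>m n) = (s * s) \<cdot>\<^sub>m EA n p \<eta> cl"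
    using EA by (simp add: mult_smult_assoc_mat[of _ n n _ n] mult_smult_distrib[of _ n n _ n])
      (rule eq_matI, auto)
  moreover have "s * s = 1 / dbar n p"
    using assms(1,2) unfolding s_def dbar_def by (simp add: real_sqrt_mult[symmetric])
  ultimately show ?thesis unfolding Lsym_def by simp
qed

lemma Theta_mult_mult_transpose_index:
  assumes "B \<in> carrier_mat k k" "j < n" "l < n" "cl j < k" "cl l < k"
  shows "(Theta n k cl * B * transpose_mat (Theta n k cl)) $$ (j, l) =
           B $$ (cl j, cl l) / (sqrt (real (csize n cl (cl j))) * sqrt (real (csize n cl (cl l))))"
  using assms
  by (simp add: scalar_prod_def Theta_def if_distrib[of "\<lambda>x. x * _"] if_distrib[of "\<lambda>x. _ * x"]
      sum.delta cong: if_cong)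

lemma Lsym_eq:
  assumes "valid_partition n k cl" "n \<ge> 2" "0 < p" "p \<le> 1" "0 \<le> \<eta>" "\<eta> \<le> 1"
  shows "Lsym n p \<eta> cl
           = alphabar n p \<eta> \<cdot>\<^sub>m 1\<^sub>m n - Theta n k cl * Bbar n k p \<eta> cl * (Theta n k cl)\<^sup>T"
    (is "_ = ?R")
proof (rule eq_matI)
  fix j l assume "j < dim_row ?R" "l < dim_col ?R"
  then have jl: "j < n" "l < n" and cl: "cl j < k" "cl l < k"
    using assms(1) by (auto simp: Theta_def valid_partition_def)
  define Nj where "Nj = real (csize n cl (cl j))"
  define Nl where "Nl = real (csize n cl (cl l))"
  have N: "Nj > 0" "Nl > 0" using csize_pos[OF assms(1)] cl unfolding Nj_def Nl_def by auto
  have d: "dbar n p > 0" using assms unfolding dbar_def by auto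
  have B: "Bbar n k p \<eta> cl $$ (cl j, cl l)
             = (if cl j = cl l then Nj else - sqrt (Nj * Nl)) * p / dbar n p * (1 - 2 * \<eta>)"
    using cl unfolding Bbar_def Nj_def Nl_def by auto
  have "Lsym n p \<eta> cl $$ (j, l)
          = (if j = l then 1 else 0)
            - p * (1 - 2 * \<eta>) * (if j = l then 0 else if cl j = cl l then 1 else -1) / dbar n p"
    using jl assms by (simp add: Lsym_eq_EA EA_def expectation_entry_pmf)
  also have "\<dots> = (if j = l then alphabar n p \<eta> else 0)
                      - Bbar n k p \<eta> cl $$ (cl j, cl l) / (sqrt Nj * sqrt Nl)"
    unfolding B using d N
    by (cases "cl j = cl l") (auto simp: field_simps alphabar_def real_sqrt_mult Nj_def Nl_def)
  also have "\<dots> = ?R $$ (j, l)"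
    using jl cl Theta_mult_mult_transpose_index[of "Bbar n k p \<eta> cl" k j n l cl]
    by (simp add: Bbar_def Theta_def Nj_def Nl_def)
  finally show "Lsym n p \<eta> cl $$ (j, l) = ?R $$ (j, l)" .
qed (auto simp: Lsym_def diag_inv_sqrt_def EDbar_def EA_def Theta_def)

lemma Bbar_carrier: "Bbar n k p \<eta> cl \<in> carrier_mat k k"
  by (simp add: Bbar_def)

lemma Bbar_symmetric: "transpose_mat (Bbar n k p \<eta> cl) = Bbar n k p \<eta> cl"
  unfolding Bbar_def by (rule eq_matI) (auto simp: mult.commute)

lemma Cbar_carrier: "Cbar n k p \<eta> cl \<in> carrier_mat k k"
  unfolding Cbar_def Bbar_def by (auto intro!: minus_carrier_mat)

lemma Cbar_symmetric: "transpose_mat (Cbar n k p \<eta> cl) = Cbar n k p \<eta> cl"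
  unfolding Cbar_def by (rule transpose_shifted_symmetric[OF Bbar_carrier Bbar_symmetric])

lemma poly_char_poly_Cbar:
  assumes vp: "valid_partition n k cl" and c: "c = p / dbar n p * (1 - 2 * \<eta>)"
    and d: "\<And>i. d i = alphabar n p \<eta> - 2 * c * real (csize n cl i)"
    and x: "\<And>i. i < k \<Longrightarrow> x \<noteq> d i"
  shows "poly (char_poly (Cbar n k p \<eta> cl)) x
           = (\<Prod>i<k. x - d i) * secular k c (\<lambda>i. real (csize n cl i)) d x"
proof -
  define N where "N i = real (csize n cl i)" for i
  have N: "N i > 0" if "i < k" for i using csize_pos[OF vp that] unfolding N_def by simp
  \<comment> \<open>\<open>x I - C\<close> is diagonal minus the rank-one matrix \<open>c w w\<^sup>T\<close> with \<open>w\<^sub>i = \<surd>n\<^sub>i\<close>.\<close>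
  have "x \<cdot>\<^sub>m 1\<^sub>m k - Cbar n k p \<eta> cl
          = Matrix.mat k k (\<lambda>(i, j). (if i = j then x - d i else 0) - c * sqrt (N i) * sqrt (N j))"
    (is "_ = ?D")
  proof (rule eq_matI)
    fix i j assume "i < dim_row ?D" "j < dim_col ?D"
    moreover have "sqrt (N i) * sqrt (N j) = (if i = j then N i else sqrt (N i * N j))"
      unfolding N_def by (simp add: real_sqrt_mult)
    ultimately show "(x \<cdot>\<^sub>m 1\<^sub>m k - Cbar n k p \<eta> cl) $$ (i, j) = ?D $$ (i, j)"
      by (auto simp: Cbar_def Bbar_def c d N_def mult.assoc)
  qed (auto simp: Cbar_def Bbar_def)
  then have "poly (char_poly (Cbar n k p \<eta> cl)) x
               = (\<Prod>i<k. x - d i) * (1 - c * (\<Sum>i<k. sqrt (N i) ^ 2 / (x - d i)))"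
    using x by (simp add: poly_char_poly[OF Cbar_carrier] det_diagonal_minus_rank_one)
  also have "(\<Sum>i<k. sqrt (N i) ^ 2 / (x - d i)) = (\<Sum>i<k. N i / (x - d i))"
    using N by (intro sum.cong) (auto simp: less_imp_le)
  finally show ?thesis unfolding N_def secular_def .
qed

lemma eig_Cbar_bounds:
  assumes vp: "valid_partition n k cl" and "n \<ge> 2" "k \<ge> 2" "0 < p" "\<eta> < 1/2"
  defines "c \<equiv> (1 - 2 * \<eta>) / (real n - 1)" and "m \<equiv> real (Min (csize n cl ` {..<k}))"
  shows "alphabar n p \<eta> \<le> eig (Cbar n k p \<eta> cl) 1"
    and "eig (Cbar n k p \<eta> cl) 2 \<le> alphabar n p \<eta> - 2 * c * m"
proof -
  define \<alpha> where "\<alpha> = alphabar n p \<eta>"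
  define N where "N i = real (csize n cl i)" for i
  define d where "d i = \<alpha> - 2 * c * N i" for i
  define ys where "ys = eigs_desc (Cbar n k p \<eta> cl)"
  have k: "0 < k" using assms(3) by simp
  have c: "c > 0" "c = p / dbar n p * (1 - 2 * \<eta>)"
    using assms(2-5) unfolding c_def dbar_def by auto
  have "m \<in> real ` csize n cl ` {..<k}" unfolding m_def using k by (intro imageI Min_in) auto
  then have m: "m > 0" using csize_pos[OF vp] by auto
  have N: "N i > 0" "m \<le> N i" if "i < k" for i
    using csize_pos[OF vp that] that unfolding N_def m_def by auto
  have d: "d i \<le> \<alpha> - 2 * c * m" if "i < k" for i
    using mult_left_mono[OF N(2)[OF that], of c] c(1) unfolding d_def by simp
  have ys: "length ys = k" "sorted_wrt (\<ge>) ys" "char_poly (Cbar n k p \<eta> cl) = (\<Prod>y\<leftarrow>ys. [:- y, 1:])"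
    unfolding ys_def using eigs_desc_real_symmetric[OF Cbar_carrier Cbar_symmetric] by auto
  have poly_ys: "poly (\<Prod>y\<leftarrow>ys. [:- y, 1:]) x = (\<Prod>i<k. x - d i) * secular k c N d x"
    if "\<alpha> - 2 * c * m < x" for x
    unfolding ys(3)[symmetric] N_def[abs_def]
    by (rule poly_char_poly_Cbar[OF vp c(2)]) (use d that in \<open>force simp: d_def N_def \<alpha>_def\<close>)+
  \<comment> \<open>At \<open>x = \<alpha>\<close> every term of the secular sum is \<open>1 / (2 c)\<close>, so the secular function
    is \<open>1 - k / 2 \<le> 0\<close> there.\<close>
  have "N i / (\<alpha> - d i) = 1 / (2 * c)" if "i < k" for i
    using N(1)[OF that] c(1) by (simp add: d_def)
  then have "(\<Sum>i<k. N i / (\<alpha> - d i)) = (\<Sum>i<k. 1 / (2 * c))" by simp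
  then have "secular k c N d \<alpha> \<le> 0" unfolding secular_def using c(1) assms(3) by simp
  moreover have "(\<Prod>i<k. \<alpha> - d i) > 0" using N c(1) by (intro prod_pos) (auto simp: d_def)
  ultimately have "poly (\<Prod>y\<leftarrow>ys. [:- y, 1:]) \<alpha> \<le> 0"
    using poly_ys[of \<alpha>] c(1) m by (simp add: mult_nonneg_nonpos)
  then have "\<alpha> \<le> hd ys" using ys(1,2) k by (intro prod_linear_nonpos_imp_le_hd) auto
  then show "alphabar n p \<eta> \<le> eig (Cbar n k p \<eta> cl) 1"
    using ys(1) k unfolding eig_def \<alpha>_def ys_def[symmetric] by (cases ys) auto
  have "ys ! 1 \<le> \<alpha> - 2 * c * m"
    using ys(1,2) assms(3) by (intro secular_second_root_le[OF c(1) k N(1) d _ _ poly_ys]) auto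
  then show "eig (Cbar n k p \<eta> cl) 2 \<le> alphabar n p \<eta> - 2 * c * m"
    unfolding eig_def \<alpha>_def ys_def by simp
qed


section \<open>The spectral gap\<close>

lemma aspect_ratio_gt_half:
  assumes "k \<ge> 2" and "sqrt (aspect_ratio n k cl) > 1 - 1 / (4 * real k * (2 + sqrt (real k)))"
  shows "aspect_ratio n k cl > 1/2"
proof -
  have "4 * real k * (2 + sqrt (real k)) \<ge> 8 * 2"
    using assms(1) by (intro mult_mono) auto
  then have "1 / (4 * real k * (2 + sqrt (real k))) \<le> 1 / 16"
    by (intro divide_left_mono) auto
  then have sqrt: "15 / 16 < sqrt (aspect_ratio n k cl)" using assms(2) by linarith
  then have "(15 / 16)\<^sup>2 < (sqrt (aspect_ratio n k cl))\<^sup>2" by (intro power_strict_mono) auto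
  moreover have "aspect_ratio n k cl > 0" using sqrt real_sqrt_gt_0_iff by fastforce
  ultimately show ?thesis by (simp add: power2_eq_square)
qed

lemma card_lt_twice_min_csize:
  assumes vp: "valid_partition n k cl" and k: "k > 0" and \<rho>: "aspect_ratio n k cl > 1/2"
  shows "real n < 2 * real k * real (Min (csize n cl ` {..<k}))"
proof -
  define mn where "mn = real (Min (csize n cl ` {..<k}))"
  define mx where "mx = real (Max (csize n cl ` {..<k}))"
  have fin: "finite (csize n cl ` {..<k})" "csize n cl ` {..<k} \<noteq> {}" using k by auto
  have "csize n cl 0 \<le> Max (csize n cl ` {..<k})" using fin k by (intro Max_ge) auto
  then have "mx > 0" using csize_pos[OF vp k] unfolding mx_def by simp
  then have "mx < 2 * mn"
    using \<rho> unfolding aspect_ratio_def mn_def[symmetric] mx_def[symmetric] by (simp add: field_simps)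
  have "real n = (\<Sum>i<k. real (csize n cl i))" using sum_csize[OF vp] by (metis of_nat_sum)
  also have "\<dots> \<le> (\<Sum>i<k. mx)" unfolding mx_def using fin(1) by (intro sum_mono) auto
  also have "\<dots> < 2 * real k * mn" using \<open>mx < 2 * mn\<close> k by simp
  finally show ?thesis unfolding mn_def .
qed

lemma spectral_gap_ge:
  assumes vp: "valid_partition n k cl" and "n \<ge> 2" "k \<ge> 2" "\<eta> < 1/2"
    and "sqrt (aspect_ratio n k cl) > 1 - 1 / (4 * real k * (2 + sqrt (real k)))"
  shows "(1 - 2 * \<eta>) / real k \<le> 2 * ((1 - 2 * \<eta>) / (real n - 1)) * real (Min (csize n cl ` {..<k}))"
proof -
  have "real n < 2 * real k * real (Min (csize n cl ` {..<k}))"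
    using assms by (intro card_lt_twice_min_csize aspect_ratio_gt_half) auto
  then have "1 / real k \<le> 2 * real (Min (csize n cl ` {..<k})) / (real n - 1)"
    using assms(2,3) by (simp add: field_simps)
  from mult_left_mono[OF this, of "1 - 2 * \<eta>"]
  have "(1 - 2 * \<eta>) / real k \<le> (1 - 2 * \<eta>) * (2 * real (Min (csize n cl ` {..<k})) / (real n - 1))"
    using assms(4) by simp
  also have "\<dots> = 2 * ((1 - 2 * \<eta>) / (real n - 1)) * real (Min (csize n cl ` {..<k}))"
    by simp
  finally show ?thesis .
qed

theorem mainTheorem17:
  fixes n k :: nat and p \<eta> :: real and cl :: "nat \<Rightarrow> nat"
  assumes "n \<ge> 2" and "k \<ge> 2"
    and "0 < p" and "p \<le> 1" and "0 \<le> \<eta>" and "\<eta> < 1/2"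
    and "valid_partition n k cl"
    and "sqrt (aspect_ratio n k cl) > 1 - 1 / (4 * real k * (2 + sqrt (real k)))"
  shows "(\<forall>V. is_bottom_eigvecs (Lsym n p \<eta> cl) (k - 1) V \<longleftrightarrow>
            (\<exists>R. is_bottom_eigvecs (Cbar n k p \<eta> cl) (k - 1) R \<and> V = Theta n k cl * R))
     \<and> eig (Lsym n p \<eta> cl) (n - k + 1) - eig (Lsym n p \<eta> cl) (n - k + 2) \<ge> (1 - 2 * \<eta>) / real k"
proof -
  note vp = assms(7)
  define \<alpha> where "\<alpha> = alphabar n p \<eta>"
  define gap where "gap = 2 * ((1 - 2 * \<eta>) / (real n - 1)) * real (Min (csize n cl ` {..<k}))"
  have L: "Lsym n p \<eta> cl = \<alpha> \<cdot>\<^sub>m 1\<^sub>m n - Theta n k cl * Bbar n k p \<eta> cl * (Theta n k cl)\<^sup>T"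
    unfolding \<alpha>_def using assms by (intro Lsym_eq) auto
  have C: "Cbar n k p \<eta> cl = \<alpha> \<cdot>\<^sub>m 1\<^sub>m k - Bbar n k p \<eta> cl" unfolding \<alpha>_def Cbar_def ..
  have top: "\<alpha> \<le> eig (Cbar n k p \<eta> cl) 1" and second: "eig (Cbar n k p \<eta> cl) 2 \<le> \<alpha> - gap"
    unfolding \<alpha>_def gap_def using eig_Cbar_bounds[OF vp] assms by auto
  have gap: "(1 - 2 * \<eta>) / real k \<le> gap"
    unfolding gap_def using spectral_gap_ge[OF vp] assms by auto
  moreover have "(1 - 2 * \<eta>) / real k > 0" using assms by simp
  ultimately have second_lt: "eig (Cbar n k p \<eta> cl) 2 < \<alpha>" using second by linarith
  interpret Lsym: compression "Theta n k cl" "Bbar n k p \<eta> cl" n k \<alpha>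
    by unfold_locales (use vp in \<open>auto intro: Theta_carrier transpose_Theta_mult_Theta Bbar_carrier\<close>)
  note spectrum = Lsym.compression_bottom_spectrum[OF Bbar_symmetric assms(2) valid_partition_le[OF vp]
      top[unfolded C] second_lt[unfolded C], folded L C]
  show ?thesis using spectrum second gap by auto
qed

end
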